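(* Let $a\geqslant 1$ and let $\Omega$ be a subset of $\mathbb{Z}_{2a}$ such that for every $g\in\Omega$ one has $|g|>2$ and $-g\in\Omega$. Let $\Psi$ be an abelian group of order $2^\alpha$ with $\alpha\geqslant 2$. Then there exists a set $\mathcal{T}$ of $|\Omega|/2$ zero-sum arrays of size $2\times 2^\alpha$ with entries in $\mathbb{Z}_{2a}\oplus\Psi$ such that the list of all entries of the arrays of $\mathcal{T}$ (counted with multiplicity) is exactly $\{(x,y): x\in\Omega,\ y\in\Psi\}$, each element appearing once.
   Context: $|g|$ denotes the order of $g$. An array with entries in an abelian group is zero-sum if the sum of the entries in each row and in each column equals $0$. *)

theory Defs
  imports "HOL-Algebra.Algebra" "HOL-Library.Multiset"
begin

text \<open>Z_m is represented by the integers {0..<m}, with arithmetic mod m.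
  The additive order of g in Z_m.\<close>
definition zmod_ord :: "int \<Rightarrow> int \<Rightarrow> nat" where
  "zmod_ord m g = (LEAST k::nat. 0 < k \<and> (int k * g) mod m = 0)"

definition zero_sum_array :: "int \<Rightarrow> ('b, 'c) monoid_scheme \<Rightarrow> nat \<Rightarrow> (nat \<Rightarrow> nat \<Rightarrow> int \<times> 'b) \<Rightarrow> bool" where
  "zero_sum_array m Psi n A \<longleftrightarrow>
     (\<forall>i<2. (\<Sum>j<n. fst (A i j)) mod m = 0 \<and> finprod Psi (\<lambda>j. snd (A i j)) {..<n} = \<one>\<^bsub>Psi\<^esub>) \<and>
     (\<forall>j<n. (\<Sum>i<2. fst (A i j)) mod m = 0 \<and> finprod Psi (\<lambda>i. snd (A i j)) {..<2} = \<one>\<^bsub>Psi\<^esub>)"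

end

theory Submission
  imports Defs
begin

(* Pair every g in Omega with -g, and every c in Psi with c t for an element t of order 2
  (which exists by Sylow, as 2 divides |Psi|). Listing Psi as u_0, u_0 t, u_1, u_1 t, ...,
  the 2 x |Psi| array whose column j holds (g, u_j) and (-g, u_j^-1), the former on top for
  even j and at the bottom for odd j, is zero-sum: each column cancels, and along a row the
  entries in columns 2l and 2l+1 add up to (0, t), so a row sums to (0, t^(|Psi|/2)) = 0
  because |Psi|/2 is even. Its entries are exactly {g, -g} x Psi, so one array for each pair
  {g, -g} lists Omega x Psi. *)

lemma bij_betw_fun_upd_pair:
  fixes h :: nat
  assumes "bij_betw u {..<2 * h} S" "x \<notin> S" "y \<notin> S" "x \<noteq> y"
  shows "bij_betw (u(2 * h := x, 2 * h + 1 := y)) {..<2 * Suc h} (insert x (insert y S))"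
proof -
  let ?v = "u(2 * h := x, 2 * h + 1 := y)"
  have "bij_betw ?v {..<2 * h} S"
    using assms(1) by (rule bij_betw_cong[THEN iffD1, rotated]) simp
  moreover have "bij_betw ?v {2 * h, 2 * h + 1} {x, y}"
    using assms(4) by (simp add: bij_betw_def)
  ultimately have "bij_betw ?v ({..<2 * h} \<union> {2 * h, 2 * h + 1}) (S \<union> {x, y})"
    by (rule bij_betw_combine) (use assms(2,3) in auto)
  moreover have "{..<2 * h} \<union> {2 * h, 2 * h + 1} = {..<2 * Suc h}" by auto
  ultimately show ?thesis by simp
qed

lemma fixed_point_free_involution_enumeration:
  assumes "finite S"
    and "\<And>x. x \<in> S \<Longrightarrow> \<sigma> x \<in> S"
    and "\<And>x. x \<in> S \<Longrightarrow> \<sigma> x \<noteq> x"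
    and "\<And>x. x \<in> S \<Longrightarrow> \<sigma> (\<sigma> x) = x"
  shows "\<exists>h u. card S = 2 * h \<and> bij_betw u {..<2 * h} S \<and> (\<forall>l<h. u (2 * l + 1) = \<sigma> (u (2 * l)))"
  using assms
proof (induction S rule: finite_psubset_induct)
  case (psubset S)
  show ?case
  proof (cases "S = {}")
    case True
    then have "bij_betw undefined {..<2 * (0::nat)} S" by (simp add: bij_betw_def)
    then show ?thesis using True by fastforce
  next
    case False
    then obtain x where x: "x \<in> S" by auto
    have \<sigma>x: "\<sigma> x \<in> S" "x \<noteq> \<sigma> x" using psubset.prems(1,2) x by metis+
    define S' where "S' = S - {x, \<sigma> x}"
    have S: "S = insert x (insert (\<sigma> x) S')" "x \<notin> S'" "\<sigma> x \<notin> S'"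
      using x \<sigma>x(1) by (auto simp: S'_def)
    have closed: "\<sigma> y \<in> S'" if "y \<in> S'" for y
    proof -
      have "y \<in> S" "y \<noteq> x" "y \<noteq> \<sigma> x" using that by (auto simp: S'_def)
      then show ?thesis
        using psubset.prems(1,3) x unfolding S'_def by (metis Diff_iff insertE singletonD)
    qed
    have "S' \<subset> S" using S by auto
    then have "\<exists>h u. card S' = 2 * h \<and> bij_betw u {..<2 * h} S' \<and> (\<forall>l<h. u (2 * l + 1) = \<sigma> (u (2 * l)))"
      using closed psubset.prems(2,3) by (intro psubset.IH) auto
    then obtain h u where
      IH: "card S' = 2 * h" "bij_betw u {..<2 * h} S'" "\<forall>l<h. u (2 * l + 1) = \<sigma> (u (2 * l))"
      by blast
    define v where "v = u(2 * h := x, 2 * h + 1 := \<sigma> x)"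
    have "bij_betw v {..<2 * Suc h} S"
      unfolding v_def S(1) using IH(2) S(2,3) \<sigma>x(2) by (rule bij_betw_fun_upd_pair)
    moreover have "card S = 2 * Suc h"
    proof -
      have "finite S'" using psubset.hyps by (simp add: S'_def)
      then show ?thesis using IH(1) S \<sigma>x(2) by simp
    qed
    moreover have "\<forall>l<Suc h. v (2 * l + 1) = \<sigma> (v (2 * l))"
      using IH(3) by (auto simp: v_def less_Suc_eq)
    ultimately show ?thesis by blast
  qed
qed

lemma sum_lessThan_double_in_pairs:
  fixes f :: "nat \<Rightarrow> 'a::comm_monoid_add"
  shows "(\<Sum>j<2 * h. f j) = (\<Sum>l<h. f (2 * l) + f (2 * l + 1))"
  by (induction h) (auto simp: add.assoc)

lemma (in comm_monoid) finprod_lessThan_double_in_pairs: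
  fixes h :: nat
  assumes "f \<in> {..<2 * h} \<rightarrow> carrier G"
  shows "finprod G f {..<2 * h} = finprod G (\<lambda>l. f (2 * l) \<otimes> f (2 * l + 1)) {..<h}"
  using assms
proof (induction h)
  case (Suc h)
  have split: "{..<2 * Suc h} = insert (2 * h + 1) (insert (2 * h) {..<2 * h})" by auto
  have f: "f \<in> {..<2 * h} \<rightarrow> carrier G" "f (2 * h) \<in> carrier G" "f (2 * h + 1) \<in> carrier G"
    using Suc.prems by auto
  have "finprod G f {..<2 * Suc h} = f (2 * h + 1) \<otimes> (f (2 * h) \<otimes> finprod G f {..<2 * h})"
    unfolding split using f by (simp add: Pi_def)
  also have "\<dots> = (f (2 * h) \<otimes> f (2 * h + 1)) \<otimes> finprod G f {..<2 * h}"
    using f by (simp add: m_ac)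
  also have "\<dots> = finprod G (\<lambda>l. f (2 * l) \<otimes> f (2 * l + 1)) {..<Suc h}"
    using Suc.IH[OF f(1)] f by (simp add: lessThan_Suc Pi_def m_ac)
  finally show ?case .
qed simp

lemma (in comm_group) finprod_inv:
  "f \<in> A \<rightarrow> carrier G \<Longrightarrow> finprod G (\<lambda>x. inv f x) A = inv finprod G f A"
proof (induction A rule: infinite_finite_induct)
  case (insert x A)
  then have "(\<lambda>x. inv f x) \<in> A \<rightarrow> carrier G" by auto
  with insert show ?case by (simp add: inv_mult)
qed simp_all

lemma (in group) even_order_imp_ex_order_two:
  assumes "finite (carrier G)" "even (order G)"
  obtains t where "t \<in> carrier G" "t \<noteq> \<one>" "t \<otimes> t = \<one>"
proof -
  have "order G = 2 ^ 1 * (order G div 2)" using assms(2) by simp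
  then obtain H where H: "subgroup H G" "card H = 2"
    using sylow_thm[of 2 G 1 "order G div 2"] assms(1) is_group by auto
  obtain p q where pq: "H = {p, q}" "p \<noteq> q" using H(2) card_2_iff by metis
  have "\<one> \<in> H" using subgroup.one_closed[OF H(1)] .
  then obtain t where t: "H = {\<one>, t}" "t \<noteq> \<one>"
    using pq by (cases "p = \<one>") (auto simp: insert_commute)
  have tc: "t \<in> carrier G" using t(1) subgroup.subset[OF H(1)] by auto
  have "t \<otimes> t \<in> H" using subgroup.m_closed[OF H(1)] t(1) by auto
  moreover have "t \<otimes> t \<noteq> t" using tc t(2) by simp
  ultimately show ?thesis using that tc t by auto
qed

lemma (in comm_group) balanced_pair_enumeration:
  assumes "finite (carrier G)" "order G = 2 * h" "even h"
  obtains u where "bij_betw u {..<2 * h} (carrier G)"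
    "finprod G (\<lambda>l. u (2 * l) \<otimes> inv u (2 * l + 1)) {..<h} = \<one>"
proof -
  obtain t where t: "t \<in> carrier G" "t \<noteq> \<one>" "t \<otimes> t = \<one>"
    using even_order_imp_ex_order_two assms(1,2) by auto
  obtain h' u where u: "card (carrier G) = 2 * h'" "bij_betw u {..<2 * h'} (carrier G)"
    "\<forall>l<h'. u (2 * l + 1) = u (2 * l) \<otimes> t"
    using fixed_point_free_involution_enumeration[of "carrier G" "\<lambda>c. c \<otimes> t"] assms(1) t
    by (auto simp: m_assoc)
  have "h' = h" using u(1) assms(2) by (simp add: order_def)
  have pair: "u (2 * l) \<otimes> inv u (2 * l + 1) = t" if "l < h" for l
  proof -
    have c: "u (2 * l) \<in> carrier G" using u(2) that \<open>h' = h\<close> by (auto simp: bij_betw_def)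
    have "inv t = t" using inv_equality[OF t(3) t(1) t(1)] .
    then show ?thesis using u(3) that c t(1) \<open>h' = h\<close> by (simp add: inv_mult m_assoc[symmetric])
  qed
  have "finprod G (\<lambda>l. u (2 * l) \<otimes> inv u (2 * l + 1)) {..<h} = finprod G (\<lambda>l. t) {..<h}"
    using t(1) pair by (intro finprod_cong') auto
  also have "\<dots> = t [^] h" using t(1) by (simp add: finprod_const)
  also have "\<dots> = (t [^] (2::nat)) [^] (h div 2)"
    using t(1) assms(3) by (simp add: nat_pow_pow)
  also have "\<dots> = \<one>" using t(1,3) by (simp add: numeral_2_eq_2)
  finally show ?thesis using that u(2) \<open>h' = h\<close> by blast
qed

lemma sum_mset_singletons_bij_betw:
  assumes "bij_betw f A B"
  shows "(\<Sum>x\<in>A. {#f x#}) = mset_set B"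
proof -
  have "(\<Sum>x\<in>A. {#f x#}) = image_mset f (mset_set A)" by (simp add: sum_unfold_sum_mset)
  also have "\<dots> = mset_set B"
    using assms image_mset_mset_set by (metis bij_betw_def)
  finally show ?thesis .
qed

lemma mset_set_Times_eq_sum:
  assumes "finite A" "finite B"
  shows "mset_set (A \<times> B) = (\<Sum>a\<in>A. mset_set ({a} \<times> B))"
  using assms(1)
proof (induction A rule: finite_induct)
  case (insert a A)
  have "insert a A \<times> B = {a} \<times> B \<union> A \<times> B" "{a} \<times> B \<inter> A \<times> B = {}"
    using insert.hyps(2) by auto
  then have "mset_set (insert a A \<times> B) = mset_set ({a} \<times> B) + mset_set (A \<times> B)"
    using mset_set_Union insert.hyps(1) assms(2) by (metis finite.emptyI finite.insertI finite_SigmaI)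
  with insert show ?case by simp
qed simp

definition pair_array :: "('b, 'c) monoid_scheme \<Rightarrow> int \<Rightarrow> int \<Rightarrow> (nat \<Rightarrow> 'b) \<Rightarrow> nat \<Rightarrow> nat \<Rightarrow> int \<times> 'b"
  where "pair_array G g g' u i j = (if (i = 0) = even j then (g, u j) else (g', inv\<^bsub>G\<^esub> u j))"

lemma (in comm_group) pair_array_zero_sum:
  fixes h :: nat
  assumes "u \<in> {..<2 * h} \<rightarrow> carrier G" "(g + g') mod m = 0"
    and "finprod G (\<lambda>l. u (2 * l) \<otimes> inv u (2 * l + 1)) {..<h} = \<one>"
  shows "zero_sum_array m G (2 * h) (pair_array G g g' u)"
  unfolding zero_sum_array_def
proof (intro conjI allI impI)
  fix i :: nat
  have "(\<Sum>j<2 * h. fst (pair_array G g g' u i j))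
      = (\<Sum>l<h. fst (pair_array G g g' u i (2 * l)) + fst (pair_array G g g' u i (2 * l + 1)))"
    by (rule sum_lessThan_double_in_pairs)
  also have "\<dots> = (\<Sum>l<h. g + g')"
    by (intro sum.cong) (auto simp: pair_array_def)
  finally show "(\<Sum>j<2 * h. fst (pair_array G g g' u i j)) mod m = 0"
    using assms(2) by (simp add: mod_eq_0_iff_dvd)
  let ?p = "\<lambda>l. u (2 * l) \<otimes> inv u (2 * l + 1)"
  have "(\<lambda>j. snd (pair_array G g g' u i j)) \<in> {..<2 * h} \<rightarrow> carrier G"
    using assms(1) by (auto simp: pair_array_def Pi_iff)
  then have "finprod G (\<lambda>j. snd (pair_array G g g' u i j)) {..<2 * h}
      = finprod G (\<lambda>l. snd (pair_array G g g' u i (2 * l)) \<otimes> snd (pair_array G g g' u i (2 * l + 1))) {..<h}"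
    by (rule finprod_lessThan_double_in_pairs)
  also have "\<dots> = finprod G (\<lambda>l. if i = 0 then ?p l else inv ?p l) {..<h}"
  proof (rule finprod_cong')
    fix l assume "l \<in> {..<h}"
    then have "u (2 * l) \<in> carrier G" "u (2 * l + 1) \<in> carrier G" using assms(1) by auto
    then show "snd (pair_array G g g' u i (2 * l)) \<otimes> snd (pair_array G g g' u i (2 * l + 1))
        = (if i = 0 then ?p l else inv ?p l)"
      by (simp add: pair_array_def inv_mult)
  qed (use assms(1) in \<open>auto simp: Pi_iff\<close>)
  also have "\<dots> = \<one>"
    using assms(1,3) finprod_inv[of ?p "{..<h}"] by (cases "i = 0") (auto simp: Pi_def)
  finally show "finprod G (\<lambda>j. snd (pair_array G g g' u i j)) {..<2 * h} = \<one>" .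
next
  fix j assume "j < 2 * h"
  then have "u j \<in> carrier G" using assms(1) by auto
  moreover have "{..<2::nat} = {0, 1}" by auto
  ultimately show "(\<Sum>i<2. fst (pair_array G g g' u i j)) mod m = 0"
    and "finprod G (\<lambda>i. snd (pair_array G g g' u i j)) {..<2} = \<one>"
    using assms(2) by (auto simp: pair_array_def add.commute)
qed

lemma (in group) pair_array_entries:
  assumes "bij_betw u {..<n} (carrier G)"
  shows "(\<Sum>i<2. \<Sum>j<n. {#pair_array G g g' u i j#})
    = mset_set ({g} \<times> carrier G) + mset_set ({g'} \<times> carrier G)"
proof -
  have "bij_betw (\<lambda>c. (g, c)) (carrier G) ({g} \<times> carrier G)"
    by (rule bij_betw_byWitness[where f' = snd]) auto
  then have entries: "bij_betw (\<lambda>j. (g, u j)) {..<n} ({g} \<times> carrier G)"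
    using bij_betw_trans[OF assms] by (simp add: comp_def)
  have "bij_betw (\<lambda>c. (g', inv c)) (carrier G) ({g'} \<times> carrier G)"
    by (rule bij_betw_byWitness[where f' = "\<lambda>x. inv (snd x)"]) auto
  then have inverse_entries: "bij_betw (\<lambda>j. (g', inv u j)) {..<n} ({g'} \<times> carrier G)"
    using bij_betw_trans[OF assms] by (simp add: comp_def)
  have "(\<Sum>i<2. \<Sum>j<n. {#pair_array G g g' u i j#}) = (\<Sum>j<n. \<Sum>i<2. {#pair_array G g g' u i j#})"
    by (rule sum.swap)
  also have "\<dots> = (\<Sum>j<n. {#(g, u j)#} + {#(g', inv u j)#})"
    by (intro sum.cong) (auto simp: pair_array_def numeral_2_eq_2)
  also have "\<dots> = mset_set ({g} \<times> carrier G) + mset_set ({g'} \<times> carrier G)"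
    by (simp only: sum.distrib sum_mset_singletons_bij_betw[OF entries]
        sum_mset_singletons_bij_betw[OF inverse_entries])
  finally show ?thesis .
qed

lemma zmod_ord_gt_two_imp_neg_mod_ne:
  assumes "2 < zmod_ord m g"
  shows "(- g) mod m \<noteq> g"
proof
  assume neg_eq: "(- g) mod m = g"
  have "(int 2 * g) mod m = (g + (- g) mod m) mod m" using neg_eq by simp
  also have "\<dots> = 0" by (simp add: mod_add_right_eq)
  finally have "zmod_ord m g \<le> 2" unfolding zmod_ord_def by (intro Least_le) simp
  with assms show False by simp
qed

lemma zmod_neg_pair_enumeration:
  assumes "\<Omega> \<subseteq> {0..<m}" "\<forall>g\<in>\<Omega>. zmod_ord m g > 2 \<and> (- g) mod m \<in> \<Omega>"
  obtains M w where "card \<Omega> = 2 * M" "bij_betw w {..<2 * M} \<Omega>"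
    "\<forall>k<M. w (2 * k + 1) = (- w (2 * k)) mod m"
proof -
  have "finite \<Omega>" using assms(1) finite_subset by blast
  then have "\<exists>M w. card \<Omega> = 2 * M \<and> bij_betw w {..<2 * M} \<Omega>
      \<and> (\<forall>k<M. w (2 * k + 1) = (- w (2 * k)) mod m)"
  proof (rule fixed_point_free_involution_enumeration)
    fix g assume g: "g \<in> \<Omega>"
    then show "(- g) mod m \<in> \<Omega>" "(- g) mod m \<noteq> g"
      using assms(2) zmod_ord_gt_two_imp_neg_mod_ne by blast+
    have "0 \<le> g" "g < m" using assms(1) g by auto
    then show "(- ((- g) mod m)) mod m = g" by (simp add: mod_minus_eq)
  qed
  then show ?thesis using that by blast
qed

lemma (in group) pair_arrays_entries:
  fixes M :: nat
  assumes "bij_betw w {..<2 * M} \<Omega>" "bij_betw u {..<n} (carrier G)"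
  shows "(\<Sum>k<M. \<Sum>i<2. \<Sum>j<n. {#pair_array G (w (2 * k)) (w (2 * k + 1)) u i j#})
    = mset_set (\<Omega> \<times> carrier G)"
proof -
  have "(\<Sum>k<M. \<Sum>i<2. \<Sum>j<n. {#pair_array G (w (2 * k)) (w (2 * k + 1)) u i j#})
      = (\<Sum>k<M. mset_set ({w (2 * k)} \<times> carrier G) + mset_set ({w (2 * k + 1)} \<times> carrier G))"
    by (simp add: pair_array_entries[OF assms(2)])
  also have "\<dots> = (\<Sum>j<2 * M. mset_set ({w j} \<times> carrier G))"
    by (rule sum_lessThan_double_in_pairs[symmetric])
  also have "\<dots> = (\<Sum>g\<in>\<Omega>. mset_set ({g} \<times> carrier G))"
    by (rule sum.reindex_bij_betw[OF assms(1)])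
  also have "\<dots> = mset_set (\<Omega> \<times> carrier G)"
    using bij_betw_finite[OF assms(1)] bij_betw_finite[OF assms(2)]
    by (intro mset_set_Times_eq_sum[symmetric]) simp_all
  finally show ?thesis .
qed

theorem lemma4p6:
  fixes a :: int and \<Omega> :: "int set" and Psi :: "('b, 'c) monoid_scheme" and \<alpha> :: nat
  assumes "a \<ge> 1"
    and "\<Omega> \<subseteq> {0..<2*a}"
    and "\<forall>g\<in>\<Omega>. zmod_ord (2*a) g > 2 \<and> (- g) mod (2*a) \<in> \<Omega>"
    and "comm_group Psi" and "finite (carrier Psi)" and "card (carrier Psi) = 2 ^ \<alpha>"
    and "\<alpha> \<ge> 2"
  shows "\<exists>T :: nat \<Rightarrow> nat \<Rightarrow> nat \<Rightarrow> int \<times> 'b.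
     (\<forall>k < card \<Omega> div 2. zero_sum_array (2*a) Psi (2 ^ \<alpha>) (T k)) \<and>
     (\<Sum>k < card \<Omega> div 2. \<Sum>i<2. \<Sum>j < 2 ^ \<alpha>. {# T k i j #}) = mset_set (\<Omega> \<times> carrier Psi)"
proof -
  interpret comm_group Psi by fact
  obtain M w where w: "card \<Omega> = 2 * M" "bij_betw w {..<2 * M} \<Omega>"
    "\<forall>k<M. w (2 * k + 1) = (- w (2 * k)) mod (2 * a)"
    using zmod_neg_pair_enumeration assms(2,3) by blast
  define h :: nat where "h = 2 ^ (\<alpha> - 1)"
  have h: "2 ^ \<alpha> = 2 * h" "even h"
    using assms(7) by (auto simp: h_def power_Suc[symmetric] simp del: power_Suc)
  obtain u where u: "bij_betw u {..<2 * h} (carrier Psi)"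
    "finprod Psi (\<lambda>l. u (2 * l) \<otimes>\<^bsub>Psi\<^esub> inv\<^bsub>Psi\<^esub> u (2 * l + 1)) {..<h} = \<one>\<^bsub>Psi\<^esub>"
    using balanced_pair_enumeration assms(5,6) h by (auto simp: order_def)
  define T where "T k = pair_array Psi (w (2 * k)) (w (2 * k + 1)) u" for k
  have "zero_sum_array (2 * a) Psi (2 * h) (T k)" if "k < M" for k
    unfolding T_def
  proof (rule pair_array_zero_sum)
    show "u \<in> {..<2 * h} \<rightarrow> carrier Psi" using u(1) by (auto simp: bij_betw_def)
    show "(w (2 * k) + w (2 * k + 1)) mod (2 * a) = 0"
      using w(3) that by (simp add: mod_add_right_eq)
  qed (fact u(2))
  moreover have "(\<Sum>k<M. \<Sum>i<2. \<Sum>j<2 * h. {#T k i j#}) = mset_set (\<Omega> \<times> carrier Psi)"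
    unfolding T_def using w(2) u(1) by (rule pair_arrays_entries)
  ultimately show ?thesis using w(1) h(1) by (intro exI[of _ T]) auto
qed

end
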